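(* Let $T>0$, $M$ and $N$ be positive integers, $\tau=T/M$, $t_k=k\tau$ ($k=0,\dots,M$), $h=1/N$ and $x_r=rh$ ($r=0,\dots,N$). Let $u:\Omega=[0,1]\times[0,T]\to\mathbb{R}$ be such that $\partial_x^3 u$ is continuous on $\Omega$, and write $u_{k}(x)=u(x,t_{k})$. Let $0<\gamma<1$ and $0\le k\le M-1$. For an integer $m\ge 1$ and $\eta>0$ put $c^{\eta}_m=\frac{(m-1)^{\eta}-m^{\eta}}{\eta}$, and set $\nu_h^{\gamma}=\frac{h^{1-\gamma}}{\Gamma(1-\gamma)}$. For $1\le r\le N-1$ define the weights $w^{\gamma}_{j,r}$, $j=0,\dots,r$, by \[ w^{\gamma}_{j,r}=\tilde w^{\gamma}_{j-1,0}-\tilde w^{\gamma}_{j,1}, \] where $\tilde w^{\gamma}_{-1,0}=0$, $\tilde w^{\gamma}_{r,1}=0$, and for $\rho\in\{0,1\}$ and $m=1,\dots,r$, \[ \tilde w^{\gamma}_{r-m,\rho}=c^{2-\gamma}_{m}-(m-\rho)\,c^{1-\gamma}_{m}. \] Then for $r=1,\dots,N-1$, \[ D_x^{\gamma}u_{k+1}(x_r)=\nu_h^{\gamma}\sum_{j=0}^{r}w^{\gamma}_{j,r}\,u_{k+1}'(x_j)+R_h^{\gamma}(r), \] where the remainder satisfies \[ \|R_h^{\gamma}\|_{\infty}\le\frac{h^{2}\bar{\mathcal{M}}_u}{8\,\Gamma(2-\gamma)},\qquad \bar{\mathcal{M}}_u=\sup_{(x,t)\in\Omega}\Big|\frac{\partial^3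 u}{\partial x^3}(x,t)\Big|. \]
   Context: For $0<\gamma<1$, the Caputo derivative in $x$ is $D_x^{\gamma}f(x)=\frac{1}{\Gamma(1-\gamma)}\int_0^{x}(x-s)^{-\gamma}f'(s)\,ds$ for $x>0$. Here $u_{k+1}'$ denotes the first derivative of $x\mapsto u(x,t_{k+1})$, and $\|R_h^\gamma\|_\infty$ denotes the maximum of $|R_h^\gamma(r)|$ over $r=1,\dots,N-1$. *)

theory Defs
  imports "HOL-Analysis.Analysis"
begin

text \<open>Caputo derivative of order gamma at x > 0 of a function whose first
  derivative is the function df:
  D^gamma f(x) = 1/Gamma(1-gamma) * integral_0^x (x-s)^(-gamma) f'(s) ds.\<close>
definition caputo :: "real \<Rightarrow> (real \<Rightarrow> real) \<Rightarrow> real \<Rightarrow> real" where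
  "caputo \<gamma> df x = 1 / Gamma (1 - \<gamma>) * integral {0..x} (\<lambda>s. (x - s) powr (- \<gamma>) * df s)"

definition cc :: "real \<Rightarrow> nat \<Rightarrow> real" where
  "cc \<eta> m = ((real m - 1) powr \<eta> - (real m) powr \<eta>) / \<eta>"

text \<open>tilde w^gamma_{i,rho} for i = r - m, m = 1..r (i.e. i = 0..r-1):
  c^{2-gamma}_m - (m - rho) c^{1-gamma}_m\<close>
definition wt :: "real \<Rightarrow> nat \<Rightarrow> nat \<Rightarrow> nat \<Rightarrow> real" where
  "wt \<gamma> r \<rho> i = cc (2 - \<gamma>) (r - i) - (real (r - i) - real \<rho>) * cc (1 - \<gamma>) (r - i)"

definition ww :: "real \<Rightarrow> nat \<Rightarrow> nat \<Rightarrow> real" where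
  "ww \<gamma> j r = (if j = 0 then 0 else wt \<gamma> r 0 (j - 1)) - (if j = r then 0 else wt \<gamma> r 1 j)"

end

theory Submission
  imports Defs
begin

text \<open>On each cell [x_i, x_(i+1)] the function u' is replaced by its linear interpolant.
  A linear function is integrated exactly against the kernel (x_r - s)^(-gamma), and collecting
  these exact cell integrals produces precisely the weights w_(j,r). The interpolation error is at
  most h^2 M/8 pointwise (a convexity argument), so its kernel-weighted integral over [0, x_r] is
  at most h^2 M/8 * x_r^(1-gamma)/(1-gamma). Since x_r <= 1 and
  (1-gamma) Gamma(1-gamma) = Gamma(2-gamma), dividing by Gamma(1-gamma) gives the bound.\<close>

lemma mvt_within_interval:
  fixes f f' :: "real \<Rightarrow> real"
  assumes deriv: "\<And>y. y \<in> {a..b} \<Longrightarrow> (f has_real_derivative f' y) (at y within {a..b})"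
    and "x \<in> {a..b}" and "y \<in> {a..b}" and "x \<le> y"
  shows "\<exists>\<xi>\<in>{x..y}. f y - f x = f' \<xi> * (y - x)"
proof (rule mvt_very_simple[where f'="\<lambda>\<xi> d. f' \<xi> * d"])
  show "x \<le> y" by fact
  fix \<xi> assume "x \<le> \<xi>" "\<xi> \<le> y"
  with assms have "(f has_real_derivative f' \<xi>) (at \<xi> within {a..b})" "{x..y} \<subseteq> {a..b}"
    by auto
  then have "(f has_real_derivative f' \<xi>) (at \<xi> within {x..y})"
    by (rule has_field_derivative_subset)
  then show "(f has_derivative (\<lambda>d. f' \<xi> * d)) (at \<xi> within {x..y})"
    by (simp add: has_field_derivative_def)
qed

lemma nonpos_between_zeros_if_second_deriv_nonneg:
  fixes p p' p'' :: "real \<Rightarrow> real"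
  assumes pa: "p a = 0" and pb: "p b = 0"
    and d1: "\<And>y. y \<in> {a..b} \<Longrightarrow> (p has_real_derivative p' y) (at y within {a..b})"
    and d2: "\<And>y. y \<in> {a..b} \<Longrightarrow> (p' has_real_derivative p'' y) (at y within {a..b})"
    and convex: "\<And>y. y \<in> {a..b} \<Longrightarrow> p'' y \<ge> 0"
    and s: "s \<in> {a..b}"
  shows "p s \<le> 0"
proof (rule ccontr)
  assume "\<not> p s \<le> 0"
  then have ps: "p s > 0" by simp
  with pa pb s have as: "a < s" and sb: "s < b"
    by (metis atLeastAtMost_iff less_irrefl order_le_less)+
  obtain \<xi>\<^sub>1 where \<xi>\<^sub>1: "\<xi>\<^sub>1 \<in> {a..s}" "p s - p a = p' \<xi>\<^sub>1 * (s - a)"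
    using mvt_within_interval[OF d1, of a s] s by auto
  obtain \<xi>\<^sub>2 where \<xi>\<^sub>2: "\<xi>\<^sub>2 \<in> {s..b}" "p b - p s = p' \<xi>\<^sub>2 * (b - s)"
    using mvt_within_interval[OF d1, of s b] s by auto
  have "p' \<xi>\<^sub>1 > 0" using \<xi>\<^sub>1(2) ps pa as by (simp add: zero_less_mult_iff)
  moreover have "p' \<xi>\<^sub>2 < 0" using \<xi>\<^sub>2(2) ps pb sb by (smt (verit) mult_nonneg_nonneg)
  moreover obtain \<eta> where "\<eta> \<in> {\<xi>\<^sub>1..\<xi>\<^sub>2}" "p' \<xi>\<^sub>2 - p' \<xi>\<^sub>1 = p'' \<eta> * (\<xi>\<^sub>2 - \<xi>\<^sub>1)"
    using mvt_within_interval[OF d2, of "\<xi>\<^sub>1" "\<xi>\<^sub>2"] \<xi>\<^sub>1(1) \<xi>\<^sub>2(1) s by auto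
  moreover from this have "p'' \<eta> \<ge> 0" and "\<xi>\<^sub>1 \<le> \<xi>\<^sub>2"
    using convex \<xi>\<^sub>1(1) \<xi>\<^sub>2(1) by auto
  ultimately show False by (smt (verit) mult_nonneg_nonneg)
qed

lemma linear_interp_error_signed:
  fixes f f' f'' :: "real \<Rightarrow> real"
  assumes ab: "a < b" and \<sigma>: "\<bar>\<sigma>\<bar> = 1"
    and d1: "\<And>y. y \<in> {a..b} \<Longrightarrow> (f has_real_derivative f' y) (at y within {a..b})"
    and d2: "\<And>y. y \<in> {a..b} \<Longrightarrow> (f' has_real_derivative f'' y) (at y within {a..b})"
    and bound: "\<And>y. y \<in> {a..b} \<Longrightarrow> \<bar>f'' y\<bar> \<le> K"
    and s: "s \<in> {a..b}"
  shows "\<sigma> * (f s - (f a + (f b - f a) / (b - a) * (s - a))) \<le> K * (s - a) * (b - s) / 2"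
proof -
  define c where "c = (f b - f a) / (b - a)"
  define p where "p y = \<sigma> * (f y - (f a + c * (y - a))) - K * (y - a) * (b - y) / 2" for y
  define p' where "p' y = \<sigma> * (f' y - c) - K * (a + b - 2 * y) / 2" for y
  have "p s \<le> 0"
  proof (rule nonpos_between_zeros_if_second_deriv_nonneg
      [where p = p and a = a and b = b and s = s and p' = p' and p'' = "\<lambda>y. \<sigma> * f'' y + K"])
    show "p a = 0" "p b = 0" using ab by (simp_all add: p_def c_def)
    fix y assume y: "y \<in> {a..b}"
    show "(p has_real_derivative p' y) (at y within {a..b})"
      unfolding p_def p'_def by (auto intro!: derivative_eq_intros d1[OF y] simp: field_simps)
    show "(p' has_real_derivative \<sigma> * f'' y + K) (at y within {a..b})"
      unfolding p'_def by (auto intro!: derivative_eq_intros d2[OF y] simp: field_simps)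
    have "\<bar>\<sigma> * f'' y\<bar> \<le> K" using bound[OF y] \<sigma> by (simp add: abs_mult)
    then show "0 \<le> \<sigma> * f'' y + K" by linarith
  qed (use s in auto)
  then show ?thesis unfolding p_def c_def by simp
qed

lemma linear_interp_error:
  fixes f f' f'' :: "real \<Rightarrow> real"
  assumes ab: "a < b"
    and d1: "\<And>y. y \<in> {a..b} \<Longrightarrow> (f has_real_derivative f' y) (at y within {a..b})"
    and d2: "\<And>y. y \<in> {a..b} \<Longrightarrow> (f' has_real_derivative f'' y) (at y within {a..b})"
    and bound: "\<And>y. y \<in> {a..b} \<Longrightarrow> \<bar>f'' y\<bar> \<le> K"
    and s: "s \<in> {a..b}"
  shows "\<bar>f s - (f a + (f b - f a) / (b - a) * (s - a))\<bar> \<le> K * (b - a)\<^sup>2 / 8"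
proof -
  define e where "e = f s - (f a + (f b - f a) / (b - a) * (s - a))"
  have "1 * e \<le> K * (s - a) * (b - s) / 2" and "-1 * e \<le> K * (s - a) * (b - s) / 2"
    unfolding e_def by (rule linear_interp_error_signed[OF ab _ d1 d2 bound s]; simp)+
  moreover have "K * (s - a) * (b - s) / 2 \<le> K * (b - a)\<^sup>2 / 8"
  proof -
    have "K \<ge> 0" using bound[of a] ab by force
    moreover have "(b - a)\<^sup>2 - 4 * ((s - a) * (b - s)) = (a + b - 2 * s)\<^sup>2"
      by (simp add: power2_eq_square algebra_simps)
    then have "4 * ((s - a) * (b - s)) \<le> (b - a)\<^sup>2"
      by (smt (verit) zero_le_power2)
    ultimately have "K * (4 * ((s - a) * (b - s))) \<le> K * (b - a)\<^sup>2"
      by (simp add: mult_left_mono)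
    then show ?thesis by (simp add: field_simps)
  qed
  ultimately show ?thesis unfolding e_def[symmetric] abs_le_iff by linarith
qed

definition powr_kernel_integral :: "real \<Rightarrow> real \<Rightarrow> real \<Rightarrow> real \<Rightarrow> real" where
  "powr_kernel_integral e X a b = ((X - a) powr e - (X - b) powr e) / e"

lemma has_integral_powr_kernel:
  fixes X a b e :: real
  assumes e: "e > 0" and ab: "a \<le> b" and bX: "b \<le> X"
  shows "((\<lambda>s. (X - s) powr (e - 1)) has_integral powr_kernel_integral e X a b) {a..b}"
proof -
  define F where "F s = - ((X - s) powr e) / e" for s
  have "((\<lambda>s. (X - s) powr (e - 1)) has_integral F b - F a) {a..b}"
  proof (rule fundamental_theorem_of_calculus_interior[OF ab])
    have "continuous_on {a..b} (\<lambda>s. (X - s) powr e)"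
      using e bX by (intro continuous_on_powr' continuous_intros) auto
    then show "continuous_on {a..b} F"
      unfolding F_def using e by (intro continuous_on_divide continuous_on_minus continuous_on_const) auto
    fix s assume "s \<in> {a<..<b}"
    then have "X - s > 0" using bX by auto
    then have "(F has_real_derivative (X - s) powr (e - 1)) (at s)"
      unfolding F_def using e by (auto intro!: derivative_eq_intros)
    then show "(F has_vector_derivative (X - s) powr (e - 1)) (at s)"
      by (simp add: has_real_derivative_iff_has_vector_derivative)
  qed
  then show ?thesis
    by (simp add: F_def powr_kernel_integral_def diff_divide_distrib)
qed

lemma weighted_integral_bound:
  fixes w g :: "real \<Rightarrow> real"
  assumes w: "(w has_integral W) {a..b}" and w_nonneg: "\<And>s. s \<in> {a..b} \<Longrightarrow> w s \<ge> 0"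
    and g: "continuous_on {a..b} g" and bound: "\<And>s. s \<in> {a..b} \<Longrightarrow> \<bar>g s\<bar> \<le> C"
  shows "\<exists>E. ((\<lambda>s. w s * g s) has_integral E) {a..b} \<and> \<bar>E\<bar> \<le> C * W"
proof -
  have major: "norm (w s * g s) \<le> C * w s" if "s \<in> {a..b}" for s
    using w_nonneg[OF that] bound[OF that] by (simp add: abs_mult) (metis mult.commute mult_left_mono)
  have Cw: "((\<lambda>s. C * w s) has_integral C * W) {a..b}"
    by (rule has_integral_mult_right[OF w])
  have "(\<lambda>s. w s * g s) integrable_on {a..b}"
  proof (rule measurable_bounded_by_integrable_imp_integrable)
    have "w \<in> borel_measurable (lebesgue_on {a..b})"
      using w by (intro integrable_imp_measurable) blast
    moreover have "g \<in> borel_measurable (lebesgue_on {a..b})"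
      using g by (intro continuous_imp_measurable_on_sets_lebesgue) auto
    ultimately show "(\<lambda>s. w s * g s) \<in> borel_measurable (lebesgue_on {a..b})"
      by (rule borel_measurable_times)
    show "(\<lambda>s. C * w s) integrable_on {a..b}" using Cw by blast
  qed (use major in auto)
  then obtain E where E: "((\<lambda>s. w s * g s) has_integral E) {a..b}" by blast
  have "norm (integral {a..b} (\<lambda>s. w s * g s)) \<le> integral {a..b} (\<lambda>s. C * w s)"
    using E Cw major by (intro integral_norm_bound_integral) auto
  then show ?thesis
    using E Cw by (auto simp: integral_unique[OF w] integral_unique[OF E])
qed

lemma product_integration_cell:
  fixes f f' f'' :: "real \<Rightarrow> real"
  assumes \<gamma>: "\<gamma> < 1" and ab: "a < b" and bX: "b \<le> X"
    and d1: "\<And>y. y \<in> {a..b} \<Longrightarrow> (f has_real_derivative f' y) (at y within {a..b})"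
    and d2: "\<And>y. y \<in> {a..b} \<Longrightarrow> (f' has_real_derivative f'' y) (at y within {a..b})"
    and bound: "\<And>y. y \<in> {a..b} \<Longrightarrow> \<bar>f'' y\<bar> \<le> K"
  shows "\<exists>E. ((\<lambda>s. (X - s) powr (- \<gamma>) * f s) has_integral
      (f a + (f b - f a) / (b - a) * (X - a)) * powr_kernel_integral (1 - \<gamma>) X a b
        - (f b - f a) / (b - a) * powr_kernel_integral (2 - \<gamma>) X a b + E) {a..b}
    \<and> \<bar>E\<bar> \<le> K * (b - a)\<^sup>2 / 8 * powr_kernel_integral (1 - \<gamma>) X a b"
proof -
  define c where "c = (f b - f a) / (b - a)"
  define P where "P s = f a + c * (s - a)" for s
  define ker where "ker = (\<lambda>s. (X - s) powr (- \<gamma>))"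
  have k1: "(ker has_integral powr_kernel_integral (1 - \<gamma>) X a b) {a..b}"
    using has_integral_powr_kernel[of "1 - \<gamma>" a b X] \<gamma> ab bX by (simp add: ker_def)
  have k2: "((\<lambda>s. (X - s) powr (1 - \<gamma>)) has_integral powr_kernel_integral (2 - \<gamma>) X a b) {a..b}"
    using has_integral_powr_kernel[of "2 - \<gamma>" a b X] \<gamma> ab bX by (simp add: algebra_simps)
  have "((\<lambda>s. P X * ker s - c * (X - s) powr (1 - \<gamma>)) has_integral
      P X * powr_kernel_integral (1 - \<gamma>) X a b - c * powr_kernel_integral (2 - \<gamma>) X a b) {a..b}"
    by (intro has_integral_diff has_integral_mult_right k1 k2)
  moreover have "P X * ker s - c * (X - s) powr (1 - \<gamma>) = ker s * P s" if "s \<in> {a..b}" for s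
  proof -
    have powr_shift: "(X - s) powr (1 - \<gamma>) = (X - s) * ker s"
      using that bX powr_mult_base[of "X - s" "- \<gamma>"] by (simp add: ker_def)
    show ?thesis unfolding P_def powr_shift by (simp add: algebra_simps)
  qed
  ultimately have interpolant: "((\<lambda>s. ker s * P s) has_integral
      P X * powr_kernel_integral (1 - \<gamma>) X a b - c * powr_kernel_integral (2 - \<gamma>) X a b) {a..b}"
    by (rule has_integral_eq[rotated]) simp
  have "\<exists>E. ((\<lambda>s. ker s * (f s - P s)) has_integral E) {a..b}
      \<and> \<bar>E\<bar> \<le> K * (b - a)\<^sup>2 / 8 * powr_kernel_integral (1 - \<gamma>) X a b"
  proof (rule weighted_integral_bound[OF k1])
    show "continuous_on {a..b} (\<lambda>s. f s - P s)"
      unfolding P_def using DERIV_continuous_on[OF d1] by (intro continuous_intros)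
    show "\<bar>f s - P s\<bar> \<le> K * (b - a)\<^sup>2 / 8" if "s \<in> {a..b}" for s
      unfolding P_def c_def by (rule linear_interp_error[OF ab d1 d2 bound that])
  qed (simp add: ker_def)
  then obtain E where E: "((\<lambda>s. ker s * (f s - P s)) has_integral E) {a..b}"
    and E_bound: "\<bar>E\<bar> \<le> K * (b - a)\<^sup>2 / 8 * powr_kernel_integral (1 - \<gamma>) X a b"
    by blast
  from has_integral_add[OF interpolant E]
  have "((\<lambda>s. (X - s) powr (- \<gamma>) * f s) has_integral
      P X * powr_kernel_integral (1 - \<gamma>) X a b - c * powr_kernel_integral (2 - \<gamma>) X a b + E) {a..b}"
    by (simp add: ker_def algebra_simps)
  with E_bound show ?thesis unfolding P_def c_def by blast
qed

lemma powr_kernel_integral_grid: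
  assumes "h > 0" and "i < r"
  shows "powr_kernel_integral e (real r * h) (real i * h) (real (Suc i) * h) = - (h powr e * cc e (r - i))"
proof -
  have left: "real r * h - real i * h = real (r - i) * h"
    and right: "real r * h - real (Suc i) * h = (real (r - i) - 1) * h"
    using assms by (simp_all add: of_nat_diff algebra_simps)
  have "(real (r - i) * h) powr e = real (r - i) powr e * h powr e"
    and "((real (r - i) - 1) * h) powr e = (real (r - i) - 1) powr e * h powr e"
    using assms by (simp_all add: powr_mult)
  then show ?thesis
    unfolding powr_kernel_integral_def left right cc_def
    by (simp add: diff_divide_distrib algebra_simps)
qed

lemma sum_powr_kernel_integral_consecutive:
  "(\<Sum>i<n. powr_kernel_integral e X (a i) (a (Suc i))) = powr_kernel_integral e X (a 0) (a n)"
  unfolding powr_kernel_integral_def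
  by (simp add: sum_divide_distrib[symmetric] sum_lessThan_telescope'[of "\<lambda>i. (X - a i) powr e"])

lemma product_integration_grid_cell:
  fixes f f' f'' :: "real \<Rightarrow> real"
  assumes h: "h > 0" and \<gamma>: "\<gamma> < 1" and i: "i < r" and rh: "real r * h \<le> 1"
    and d1: "\<And>y. y \<in> {0..1} \<Longrightarrow> (f has_real_derivative f' y) (at y within {0..1})"
    and d2: "\<And>y. y \<in> {0..1} \<Longrightarrow> (f' has_real_derivative f'' y) (at y within {0..1})"
    and bound: "\<And>y. y \<in> {0..1} \<Longrightarrow> \<bar>f'' y\<bar> \<le> K"
  shows "\<exists>E. ((\<lambda>s. (real r * h - s) powr (- \<gamma>) * f s) has_integral
        h powr (1 - \<gamma>) * (f (real (Suc i) * h) * wt \<gamma> r 0 i - f (real i * h) * wt \<gamma> r 1 i) + E)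
        {real i * h..real (Suc i) * h}
      \<and> \<bar>E\<bar> \<le> K * h\<^sup>2 / 8 * powr_kernel_integral (1 - \<gamma>) (real r * h) (real i * h) (real (Suc i) * h)"
proof -
  define a b X where "a = real i * h" and "b = real (Suc i) * h" and "X = real r * h"
  have ab: "a < b" using h by (simp add: a_def b_def)
  have bX: "b \<le> X" using h i by (simp add: b_def X_def mult_right_mono)
  have sub: "{a..b} \<subseteq> {0..1}" using bX rh h by (auto simp: a_def X_def)
  have width: "b - a = h" and distance: "X - a = real (r - i) * h"
    using i by (simp_all add: a_def b_def X_def of_nat_diff algebra_simps)
  have "\<exists>E. ((\<lambda>s. (X - s) powr (- \<gamma>) * f s) has_integral
      (f a + (f b - f a) / (b - a) * (X - a)) * powr_kernel_integral (1 - \<gamma>) X a b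
        - (f b - f a) / (b - a) * powr_kernel_integral (2 - \<gamma>) X a b + E) {a..b}
    \<and> \<bar>E\<bar> \<le> K * (b - a)\<^sup>2 / 8 * powr_kernel_integral (1 - \<gamma>) X a b"
  proof (rule product_integration_cell[OF \<gamma> ab bX])
    fix y assume "y \<in> {a..b}"
    with sub have y: "y \<in> {0..1}" by blast
    show "(f has_real_derivative f' y) (at y within {a..b})"
      by (rule has_field_derivative_subset[OF d1[OF y] sub])
    show "(f' has_real_derivative f'' y) (at y within {a..b})"
      by (rule has_field_derivative_subset[OF d2[OF y] sub])
    show "\<bar>f'' y\<bar> \<le> K" by (rule bound[OF y])
  qed
  moreover have "(f a + (f b - f a) / (b - a) * (X - a)) * powr_kernel_integral (1 - \<gamma>) X a b
        - (f b - f a) / (b - a) * powr_kernel_integral (2 - \<gamma>) X a b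
      = h powr (1 - \<gamma>) * (f b * wt \<gamma> r 0 i - f a * wt \<gamma> r 1 i)"
  proof -
    have "h powr (2 - \<gamma>) = h * h powr (1 - \<gamma>)"
      using h powr_mult_base[of h "1 - \<gamma>"] by simp
    with h show ?thesis
      unfolding width distance
      unfolding a_def b_def X_def powr_kernel_integral_grid[OF h i] wt_def
      by (simp add: field_simps)
  qed
  ultimately show ?thesis unfolding width by (simp add: a_def b_def X_def)
qed

lemma has_integral_consecutive_intervals:
  fixes a :: "nat \<Rightarrow> real" and g :: "real \<Rightarrow> real"
  assumes mono: "\<And>i. i < n \<Longrightarrow> a i \<le> a (Suc i)"
    and cells: "\<And>i. i < n \<Longrightarrow> (g has_integral v i) {a i..a (Suc i)}"
  shows "(g has_integral (\<Sum>i<n. v i)) {a 0..a n} \<and> a 0 \<le> a n"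
  using assms
proof (induction n)
  case 0
  then show ?case using has_integral_refl(1)[of g "a 0"] by simp
next
  case (Suc n)
  then have IH: "(g has_integral (\<Sum>i<n. v i)) {a 0..a n}" "a 0 \<le> a n" by auto
  with Suc.prems(1)[of n] Suc.prems(2)[of n] show ?case
    by (auto intro: has_integral_combine)
qed

lemma sum_ww_eq:
  "(\<Sum>j = 0..r. ww \<gamma> j r * F j) = (\<Sum>i<r. wt \<gamma> r 0 i * F (Suc i) - wt \<gamma> r 1 i * F i)"
proof (cases r)
  case 0
  then show ?thesis by (simp add: ww_def)
next
  case (Suc q)
  have shifted: "(\<Sum>j = 0..r. (if j = 0 then 0 else wt \<gamma> r 0 (j - 1)) * F j) = (\<Sum>i<r. wt \<gamma> r 0 i * F (Suc i))"
    unfolding Suc sum.atLeast0_atMost_Suc_shift by (simp add: atLeast0AtMost lessThan_Suc_atMost)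
  have truncated: "(\<Sum>j = 0..r. (if j = r then 0 else wt \<gamma> r 1 j) * F j) = (\<Sum>i<r. wt \<gamma> r 1 i * F i)"
    by (simp add: atLeast0AtMost lessThan_Suc_atMost[symmetric])
  show ?thesis unfolding ww_def left_diff_distrib sum_subtractf shifted truncated ..
qed

lemma caputo_product_integration_error:
  fixes f f' f'' :: "real \<Rightarrow> real"
  assumes h: "h > 0" and \<gamma>: "\<gamma> < 1" and rh: "real r * h \<le> 1"
    and d1: "\<And>y. y \<in> {0..1} \<Longrightarrow> (f has_real_derivative f' y) (at y within {0..1})"
    and d2: "\<And>y. y \<in> {0..1} \<Longrightarrow> (f' has_real_derivative f'' y) (at y within {0..1})"
    and bound: "\<And>y. y \<in> {0..1} \<Longrightarrow> \<bar>f'' y\<bar> \<le> K"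
  shows "\<bar>caputo \<gamma> f (real r * h)
           - h powr (1 - \<gamma>) / Gamma (1 - \<gamma>) * (\<Sum>j = 0..r. ww \<gamma> j r * f (real j * h))\<bar>
         \<le> h\<^sup>2 * K / (8 * Gamma (2 - \<gamma>))"
proof -
  define X where "X = real r * h"
  define a where "a i = real i * h" for i
  define V where "V i = h powr (1 - \<gamma>) * (f (a (Suc i)) * wt \<gamma> r 0 i - f (a i) * wt \<gamma> r 1 i)" for i
  define C where "C = K * h\<^sup>2 / 8"
  have "\<forall>i. \<exists>E. i < r \<longrightarrow> ((\<lambda>s. (X - s) powr (- \<gamma>) * f s) has_integral V i + E) {a i..a (Suc i)}
        \<and> \<bar>E\<bar> \<le> C * powr_kernel_integral (1 - \<gamma>) X (a i) (a (Suc i))"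
    using product_integration_grid_cell[OF h \<gamma> _ rh d1 d2 bound]
    unfolding X_def a_def V_def C_def by blast
  then obtain E where
    E: "\<And>i. i < r \<Longrightarrow> ((\<lambda>s. (X - s) powr (- \<gamma>) * f s) has_integral V i + E i) {a i..a (Suc i)}"
    and E_bound: "\<And>i. i < r \<Longrightarrow> \<bar>E i\<bar> \<le> C * powr_kernel_integral (1 - \<gamma>) X (a i) (a (Suc i))"
    by metis
  have "((\<lambda>s. (X - s) powr (- \<gamma>) * f s) has_integral (\<Sum>i<r. V i + E i)) {0..X}"
    using has_integral_consecutive_intervals[of r a _ "\<lambda>i. V i + E i", OF _ E] h
    by (simp add: a_def X_def)
  then have caputo_sum: "caputo \<gamma> f X = (\<Sum>i<r. V i) / Gamma (1 - \<gamma>) + (\<Sum>i<r. E i) / Gamma (1 - \<gamma>)"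
    by (simp add: caputo_def integral_unique sum.distrib add_divide_distrib)
  have quadrature: "(\<Sum>i<r. V i) = h powr (1 - \<gamma>) * (\<Sum>j = 0..r. ww \<gamma> j r * f (real j * h))"
    by (simp add: V_def a_def sum_ww_eq sum_distrib_left right_diff_distrib mult.commute)
  have "\<bar>\<Sum>i<r. E i\<bar> \<le> (\<Sum>i<r. \<bar>E i\<bar>)" by (rule sum_abs)
  also have "\<dots> \<le> (\<Sum>i<r. C * powr_kernel_integral (1 - \<gamma>) X (a i) (a (Suc i)))"
    using E_bound by (intro sum_mono) simp
  also have "\<dots> = C * (X powr (1 - \<gamma>) / (1 - \<gamma>))"
    unfolding sum_distrib_left[symmetric] sum_powr_kernel_integral_consecutive
    by (simp add: powr_kernel_integral_def a_def X_def)
  also have "\<dots> \<le> C / (1 - \<gamma>)"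
  proof -
    have "X powr (1 - \<gamma>) \<le> 1" using h rh \<gamma> by (simp add: X_def powr_le1)
    moreover have "C \<ge> 0" using bound[of 0] by (simp add: C_def)
    ultimately show ?thesis using \<gamma> by (simp add: divide_right_mono mult_left_le)
  qed
  finally have error_sum: "\<bar>\<Sum>i<r. E i\<bar> \<le> C / (1 - \<gamma>)" .
  have Gamma_pos: "Gamma (1 - \<gamma>) > 0" using \<gamma> by (simp add: Gamma_real_pos)
  have Gamma_two: "Gamma (2 - \<gamma>) = (1 - \<gamma>) * Gamma (1 - \<gamma>)"
    using Gamma_plus1[of "1 - \<gamma>"] \<gamma> by (auto simp: nonpos_Ints_def algebra_simps)
  have "caputo \<gamma> f X - h powr (1 - \<gamma>) / Gamma (1 - \<gamma>) * (\<Sum>j = 0..r. ww \<gamma> j r * f (real j * h))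
      = (\<Sum>i<r. E i) / Gamma (1 - \<gamma>)"
    by (simp add: caputo_sum quadrature)
  then have "\<bar>caputo \<gamma> f X - h powr (1 - \<gamma>) / Gamma (1 - \<gamma>) * (\<Sum>j = 0..r. ww \<gamma> j r * f (real j * h))\<bar>
      = \<bar>\<Sum>i<r. E i\<bar> / Gamma (1 - \<gamma>)"
    using Gamma_pos by simp
  also have "\<dots> \<le> C / (1 - \<gamma>) / Gamma (1 - \<gamma>)"
    using error_sum Gamma_pos by (rule divide_right_mono[OF _ less_imp_le])
  also have "\<dots> = h\<^sup>2 * K / (8 * Gamma (2 - \<gamma>))"
    unfolding Gamma_two C_def by (simp add: field_simps)
  finally show ?thesis unfolding X_def .
qed

lemma abs_le_Sup_abs_compact:
  fixes g :: "'a::topological_space \<Rightarrow> 'b::topological_space \<Rightarrow> real"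
  assumes cont: "continuous_on (A \<times> B) (\<lambda>(x, t). g x t)" and "compact A" and "compact B"
    and "y \<in> A" and "s \<in> B"
  shows "\<bar>g y s\<bar> \<le> Sup {\<bar>g x t\<bar> | x t. x \<in> A \<and> t \<in> B}"
proof (rule cSup_upper)
  show "\<bar>g y s\<bar> \<in> {\<bar>g x t\<bar> | x t. x \<in> A \<and> t \<in> B}" using assms by blast
  have "bounded ((\<lambda>(x, t). g x t) ` (A \<times> B))"
    using assms by (intro compact_imp_bounded compact_continuous_image compact_Times)
  then obtain C where "\<And>z. z \<in> (\<lambda>(x, t). g x t) ` (A \<times> B) \<Longrightarrow> norm z \<le> C"
    unfolding bounded_iff by blast
  then show "bdd_above {\<bar>g x t\<bar> | x t. x \<in> A \<and> t \<in> B}"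
    by (intro bdd_aboveI[of _ C]) force
qed

theorem theorem5p2:
  fixes T \<gamma> :: real and M N k :: nat
    and u u1 u2 u3 :: "real \<Rightarrow> real \<Rightarrow> real"
  assumes "T > 0" and "M > 0" and "N > 0"
    and "0 < \<gamma>" and "\<gamma> < 1" and "k \<le> M - 1"
    and d1: "\<And>x t. x \<in> {0..1} \<Longrightarrow> t \<in> {0..T} \<Longrightarrow>
              ((\<lambda>y. u y t) has_real_derivative u1 x t) (at x within {0..1})"
    and d2: "\<And>x t. x \<in> {0..1} \<Longrightarrow> t \<in> {0..T} \<Longrightarrow>
              ((\<lambda>y. u1 y t) has_real_derivative u2 x t) (at x within {0..1})"
    and d3: "\<And>x t. x \<in> {0..1} \<Longrightarrow> t \<in> {0..T} \<Longrightarrow>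
              ((\<lambda>y. u2 y t) has_real_derivative u3 x t) (at x within {0..1})"
    and cont: "continuous_on ({0..1} \<times> {0..T}) (\<lambda>(x, t). u3 x t)"
  shows "let \<tau> = T / real M; h = 1 / real N;
             t = (\<lambda>i::nat. real i * \<tau>); x = (\<lambda>i::nat. real i * h);
             \<nu> = h powr (1 - \<gamma>) / Gamma (1 - \<gamma>);
             Mbar = Sup {\<bar>u3 y s\<bar> | y s. y \<in> {0..1} \<and> s \<in> {0..T}};
             R = (\<lambda>r. caputo \<gamma> (\<lambda>y. u1 y (t (k + 1))) (x r)
                      - \<nu> * (\<Sum>j = 0..r. ww \<gamma> j r * u1 (x j) (t (k + 1))))
         in \<forall>r \<in> {1..N - 1}. \<bar>R r\<bar> \<le> h\<^sup>2 * Mbar / (8 * Gamma (2 - \<gamma>))"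
proof -
  define t where "t = real (k + 1) * (T / real M)"
  have "real (k + 1) * (T / real M) \<le> real M * (T / real M)"
    using assms(1,2,6) by (intro mult_right_mono) auto
  then have t: "t \<in> {0..T}" using assms(1,2) by (simp add: t_def)
  have bound: "\<bar>u3 y t\<bar> \<le> Sup {\<bar>u3 y s\<bar> | y s. y \<in> {0..1} \<and> s \<in> {0..T}}" if "y \<in> {0..1}" for y
    using abs_le_Sup_abs_compact[OF cont _ _ that t] by simp
  show ?thesis
    unfolding Let_def t_def[symmetric]
  proof
    fix r assume "r \<in> {1..N - 1}"
    then have "real r * (1 / real N) \<le> 1" using \<open>N > 0\<close> by (auto simp: field_simps)
    from caputo_product_integration_error[OF _ \<open>\<gamma> < 1\<close> this d2[OF _ t] d3[OF _ t] bound]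
    show "\<bar>caputo \<gamma> (\<lambda>y. u1 y t) (real r * (1 / real N))
        - (1 / real N) powr (1 - \<gamma>) / Gamma (1 - \<gamma>)
          * (\<Sum>j = 0..r. ww \<gamma> j r * u1 (real j * (1 / real N)) t)\<bar>
      \<le> (1 / real N)\<^sup>2 * Sup {\<bar>u3 y s\<bar> | y s. y \<in> {0..1} \<and> s \<in> {0..T}} / (8 * Gamma (2 - \<gamma>))"
      using \<open>N > 0\<close> by simp
  qed
qed

end
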